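(* Assume $(H_S(\infty))$ and let $\mathbf a_\lambda,\mathbf n_\lambda,\mathbf m_\lambda$ be as in the context. Let $(N^S_t(i))_{t\ge0,i\in\mathbb{Z}}$ be i.i.d. $SR(\mu_S)$-processes and $a<b$. Then: (i) for $t<1$, $\lim_{\lambda\to0}\Pr[\forall i\in\{\lfloor a\mathbf m_\lambda\rfloor,\dots,\lfloor b\mathbf m_\lambda\rfloor\},\ N^S_{\mathbf a_\lambda t}(i)>0]=0$; (ii) for $t\ge1$, the same probability tends to $1$; (iii) for $t<1$, $\lim_{\lambda\to0}\Pr[\forall i\in\{\lfloor a\mathbf n_\lambda\rfloor,\dots,\lfloor b\mathbf n_\lambda\rfloor\},\ N^S_{\mathbf a_\lambda t}(i)>0]=0$; (iv) for $t>1$, the probability in (iii) tends to $1$; (v) for $t>0$, $\lim_{\lambda\to0}\Pr[\exists i\in\{\lfloor a\mathbf m_\lambda\rfloor,\dots,\lfloor b\mathbf m_\lambda\rfloor\},\ N^S_{\mathbf a_\lambda t}(i)>0]=1$.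
   Context: $(H_S(\infty))$: $\mu_S$ is a probability measure on $(0,\infty)$ with unbounded support and finite mean $m_S$; with $\nu_S(dt)=m_S^{-1}\mu_S((t,\infty))dt$, for all $t>0$, $\lim_{x\to\infty}\nu_S((x,\infty))/\nu_S((tx,\infty))=t^\infty$ ($=0,1,\infty$ according as $t<1,t=1,t>1$). $\mathbf a_\lambda$ is the unique solution of $\lambda\mathbf a_\lambda=\nu_S((\mathbf a_\lambda,\infty))$, $\mathbf n_\lambda=\lfloor1/(\lambda\mathbf a_\lambda)\rfloor$, and $\mathbf m_\lambda:(0,1]\to\mathbb{N}$ is non-increasing with $\mathbf m_\lambda\to\infty$, $\mathbf m_\lambda/\mathbf n_\lambda\to0$, and $\mathbf m_\lambda\nu_S((\mathbf a_\lambda z,\infty))\to\infty$ for every $z\in[0,1)$, as $\lambda\to0$. A $SR(\mu)$-process: $N_t=\#\{k\ge1:T_k\le t\}$ with $T_1\sim\nu_\mu(dt)=m_\mu^{-1}\mu((t,\infty))dt$, $T_{k+1}=T_k+X_k$, $(X_k)$ i.i.d. with law $\mu$ independent of $T_1$. *)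

theory Defs
  imports "HOL-Probability.Probability"
begin

definition mean_of :: "real measure \<Rightarrow> real" where
  "mean_of \<mu> = (\<integral>x. x \<partial>\<mu>)"

text \<open>Stationary delay law: nu(dt) = m^{-1} mu((t,inf)) dt on (0,inf).\<close>
definition nu_of :: "real measure \<Rightarrow> real measure" where
  "nu_of \<mu> = density lborel
     (\<lambda>t. ennreal (indicator {0<..} t * measure \<mu> {t<..} / mean_of \<mu>))"

definition nu_tail :: "real measure \<Rightarrow> real \<Rightarrow> real" where
  "nu_tail \<mu> x = measure (nu_of \<mu>) {x<..}"

definition H_S_infty :: "real measure \<Rightarrow> bool" where
  "H_S_infty \<mu> \<longleftrightarrow>
     prob_space \<mu> \<and> sets \<mu> = sets borel \<and> measure \<mu> {..0} = 0 \<and>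
     (\<forall>x. measure \<mu> {x<..} > 0) \<and>
     integrable \<mu> (\<lambda>x. x) \<and>
     (\<forall>t>0. (t < 1 \<longrightarrow> ((\<lambda>x. nu_tail \<mu> x / nu_tail \<mu> (t * x)) \<longlongrightarrow> 0) at_top) \<and>
            (t = 1 \<longrightarrow> ((\<lambda>x. nu_tail \<mu> x / nu_tail \<mu> (t * x)) \<longlongrightarrow> 1) at_top) \<and>
            (t > 1 \<longrightarrow> filterlim (\<lambda>x. nu_tail \<mu> x / nu_tail \<mu> (t * x)) at_top at_top))"

definition a_of :: "real measure \<Rightarrow> real \<Rightarrow> real" where
  "a_of \<mu> l = (THE a. l * a = nu_tail \<mu> a)"

definition n_of :: "real measure \<Rightarrow> real \<Rightarrow> nat" where
  "n_of \<mu> l = nat \<lfloor>1 / (l * a_of \<mu> l)\<rfloor>"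

text \<open>Admissible m_lambda : (0,1] -> N (values outside (0,1] are irrelevant).\<close>
definition admissible_m :: "real measure \<Rightarrow> (real \<Rightarrow> nat) \<Rightarrow> bool" where
  "admissible_m \<mu> m \<longleftrightarrow>
     (\<forall>l1 l2. 0 < l1 \<longrightarrow> l1 \<le> l2 \<longrightarrow> l2 \<le> 1 \<longrightarrow> m l2 \<le> m l1) \<and>
     filterlim m at_top (at_right 0) \<and>
     ((\<lambda>l. real (m l) / real (n_of \<mu> l)) \<longlongrightarrow> 0) (at_right 0) \<and>
     (\<forall>z. 0 \<le> z \<and> z < 1 \<longrightarrow>
        filterlim (\<lambda>l. real (m l) * nu_tail \<mu> (a_of \<mu> l * z)) at_top (at_right 0))"

text \<open>Renewal times of process i: SR_time .. i k = T_{k+1}(i);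
  T_1(i) = T1 i, T_{k+1}(i) = T_k(i) + X_k(i) (X i k stands for X_{k+1}).\<close>
fun SR_time :: "(int \<Rightarrow> 'w \<Rightarrow> real) \<Rightarrow> (int \<Rightarrow> nat \<Rightarrow> 'w \<Rightarrow> real) \<Rightarrow> int \<Rightarrow> nat \<Rightarrow> 'w \<Rightarrow> real" where
  "SR_time T1 X i 0 w = T1 i w"
| "SR_time T1 X i (Suc k) w = SR_time T1 X i k w + X i k w"

definition SR_count :: "(int \<Rightarrow> 'w \<Rightarrow> real) \<Rightarrow> (int \<Rightarrow> nat \<Rightarrow> 'w \<Rightarrow> real) \<Rightarrow> int \<Rightarrow> real \<Rightarrow> 'w \<Rightarrow> nat" where
  "SR_count T1 X i t w = card {k. SR_time T1 X i k w \<le> t}"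

definition iid_SR_family :: "'w measure \<Rightarrow> real measure \<Rightarrow> (int \<Rightarrow> 'w \<Rightarrow> real) \<Rightarrow> (int \<Rightarrow> nat \<Rightarrow> 'w \<Rightarrow> real) \<Rightarrow> bool" where
  "iid_SR_family M \<mu> T1 X \<longleftrightarrow>
     prob_space M \<and>
     prob_space.indep_vars M (\<lambda>_. borel)
       (\<lambda>j. case j of Inl i \<Rightarrow> T1 i | Inr (i, k) \<Rightarrow> X i k) UNIV \<and>
     (\<forall>i. distr M borel (T1 i) = nu_of \<mu>) \<and>
     (\<forall>i k. distr M borel (X i k) = \<mu>)"

definition all_pos_prob where
  "all_pos_prob M T1 X I s = measure M {w \<in> space M. \<forall>i\<in>I. SR_count T1 X i s w > 0}"

definition some_pos_prob where
  "some_pos_prob M T1 X I s = measure M {w \<in> space M. \<exists>i\<in>I. SR_count T1 X i s w > 0}"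

end

theory Submission
  imports Defs
begin

(*
  Because the gaps X_k(i) are a.s. positive and i.i.d., the renewal times
  T_k(i) increase to infinity, so N_s(i) > 0 holds exactly when the first renewal
  T_1(i) is at most s.  Independence of the T_1(i) therefore gives the closed forms
      P[all N_s(i) > 0, i in I] = (1 - nu(s))^#I,     P[some N_s(i) > 0] = 1 - nu(s)^#I,
  where nu(s) = nu_S((s,oo)).  Each limit of the theorem is then a statement about
  (1 - q)^c with q = nu(a_lambda t) and c the size of the index interval:
  (1 - q)^c -> 0 when q c -> oo and (1 - q)^c -> 1 when q c -> 0.
  The products q c are controlled by the defining equation lambda a_lambda = nu(a_lambda)
  (so n_lambda is about 1/nu(a_lambda)), by the regular variation of index infinity in
  (H_S(oo)) (which compares nu(a_lambda t) with nu(a_lambda)) and by the admissibility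
  of m_lambda.
*)

section \<open>Renewal paths\<close>

lemma SR_time_incseq:
  assumes "\<And>k. 0 \<le> X i k w"
  shows "incseq (\<lambda>k. SR_time T1 X i k w)"
  by (rule incseq_SucI) (simp add: assms)

lemma SR_time_unbounded:
  assumes nonneg: "\<And>k. 0 \<le> X i k w" and "0 < \<delta>" and large: "\<And>N. \<exists>j\<ge>N. \<delta> < X i j w"
  shows "\<exists>K. \<forall>k\<ge>K. s < SR_time T1 X i k w"
proof -
  note mono = incseqD[OF SR_time_incseq[of X i w T1, OF nonneg]]
  have reach: "\<exists>K. T1 i w + real n * \<delta> \<le> SR_time T1 X i K w" for n :: nat
  proof (induction n)
    case 0
    show ?case by (rule exI[of _ 0]) simp
  next
    case (Suc n)
    then obtain K where K: "T1 i w + real n * \<delta> \<le> SR_time T1 X i K w" by blast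
    obtain j where j: "K \<le> j" "\<delta> < X i j w" using large by blast
    have "T1 i w + real (Suc n) * \<delta> \<le> SR_time T1 X i (Suc j) w"
      using K j mono[OF j(1)] by (simp add: algebra_simps)
    then show ?case by blast
  qed
  obtain n :: nat where "s - T1 i w < real n * \<delta>"
    using reals_Archimedean3[OF \<open>0 < \<delta>\<close>] by blast
  moreover obtain K where "T1 i w + real n * \<delta> \<le> SR_time T1 X i K w"
    using reach by blast
  ultimately have "s < SR_time T1 X i K w" by linarith
  then have "\<forall>k\<ge>K. s < SR_time T1 X i k w"
    using mono by (meson less_le_trans)
  then show ?thesis by blast
qed

lemma SR_count_pos_iff:
  "0 < SR_count T1 X i s w \<longleftrightarrow>
     (\<exists>K. \<forall>k. K \<le> k \<longrightarrow> s < SR_time T1 X i k w) \<and> (\<exists>k. SR_time T1 X i k w \<le> s)"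
proof -
  have fin: "finite {k. SR_time T1 X i k w \<le> s} \<longleftrightarrow> (\<exists>K. \<forall>k. K \<le> k \<longrightarrow> s < SR_time T1 X i k w)"
    unfolding finite_nat_set_iff_bounded by (auto simp: not_le) (meson leD not_le_imp_less)+
  show ?thesis unfolding SR_count_def by (subst card_gt_0_iff) (auto simp: fin)
qed

lemma SR_count_pos_iff_first_renewal:
  assumes nonneg: "\<And>k. 0 \<le> X i k w" and "0 < \<delta>" and large: "\<And>N. \<exists>j\<ge>N. \<delta> < X i j w"
  shows "0 < SR_count T1 X i s w \<longleftrightarrow> T1 i w \<le> s"
proof -
  have "T1 i w \<le> SR_time T1 X i k w" for k
    using incseqD[OF SR_time_incseq[of X i w T1, OF nonneg], of 0 k] by simp
  then show ?thesis
    unfolding SR_count_pos_iff using SR_time_unbounded[of X i w \<delta> s T1, OF nonneg \<open>0 < \<delta>\<close> large]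
    by (metis SR_time.simps(1) order_trans)
qed

section \<open>Independent products\<close>

lemma (in prob_space) prob_INT_indep_identically_distributed:
  assumes indep: "indep_vars (\<lambda>_. borel) Y UNIV" and I: "finite I" "I \<noteq> {}"
    and g: "inj_on g I" and distr: "\<And>i. i \<in> I \<Longrightarrow> distr M borel (Y (g i)) = D"
    and B: "B \<in> sets borel"
  shows "prob (\<Inter>i\<in>I. Y (g i) -` B \<inter> space M) = measure D B ^ card I"
proof -
  have rv: "random_variable borel (Y j)" for j
    using indep unfolding indep_vars_def2 by blast
  have ind: "indep_sets (\<lambda>j. {Y j -` A \<inter> space M | A. A \<in> sets borel}) UNIV"
    using indep unfolding indep_vars_def2 by simp
  have "prob (\<Inter>i\<in>I. Y (g i) -` B \<inter> space M) = prob (\<Inter>j\<in>g ` I. Y j -` B \<inter> space M)"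
    by simp
  also have "\<dots> = (\<Prod>j\<in>g ` I. prob (Y j -` B \<inter> space M))"
    by (rule indep_setsD[OF ind]) (use I B in auto)
  also have "\<dots> = (\<Prod>i\<in>I. prob (Y (g i) -` B \<inter> space M))"
    by (simp add: prod.reindex[OF g])
  also have "\<dots> = (\<Prod>i\<in>I. measure D B)"
  proof (rule prod.cong)
    fix i assume "i \<in> I"
    then show "prob (Y (g i) -` B \<inter> space M) = measure D B"
      using measure_distr[OF rv B, of "g i"] distr by simp
  qed simp
  finally show ?thesis by simp
qed

section \<open>Families of i.i.d. SR-processes\<close>

definition SR_vars :: "(int \<Rightarrow> 'w \<Rightarrow> real) \<Rightarrow> (int \<Rightarrow> nat \<Rightarrow> 'w \<Rightarrow> real) \<Rightarrow> int + int \<times> nat \<Rightarrow> 'w \<Rightarrow> real"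
  where "SR_vars T1 X j = (case j of Inl i \<Rightarrow> T1 i | Inr (i, k) \<Rightarrow> X i k)"

lemma SR_vars_simps [simp]:
  "SR_vars T1 X (Inl i) = T1 i" "SR_vars T1 X (Inr (i, k)) = X i k"
  by (simp_all add: SR_vars_def)

lemma iid_SR_prob_space: "iid_SR_family M \<mu> T1 X \<Longrightarrow> prob_space M"
  unfolding iid_SR_family_def by simp

lemma iid_SR_indep: "iid_SR_family M \<mu> T1 X \<Longrightarrow> prob_space.indep_vars M (\<lambda>_. borel) (SR_vars T1 X) UNIV"
  unfolding iid_SR_family_def SR_vars_def by simp

lemma iid_SR_distr:
  assumes "iid_SR_family M \<mu> T1 X"
  shows "distr M borel (T1 i) = nu_of \<mu>" "distr M borel (X i k) = \<mu>"
  using assms unfolding iid_SR_family_def by simp_all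

lemma iid_SR_measurable:
  assumes "iid_SR_family M \<mu> T1 X"
  shows "T1 i \<in> borel_measurable M" "X i k \<in> borel_measurable M"
proof -
  interpret prob_space M using iid_SR_prob_space[OF assms] .
  have "SR_vars T1 X j \<in> borel_measurable M" for j
    using iid_SR_indep[OF assms] unfolding indep_vars_def2 by simp
  from this[of "Inl i"] this[of "Inr (i, k)"]
  show "T1 i \<in> borel_measurable M" "X i k \<in> borel_measurable M" by simp_all
qed

lemma SR_time_measurable:
  assumes "iid_SR_family M \<mu> T1 X"
  shows "SR_time T1 X i k \<in> borel_measurable M"
proof (induction k)
  case 0
  then show ?case using iid_SR_measurable[OF assms] by (simp add: SR_time.simps(1)[abs_def])
next
  case (Suc k)
  have "SR_time T1 X i (Suc k) = (\<lambda>w. SR_time T1 X i k w + X i k w)" by auto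
  then show ?case using Suc iid_SR_measurable[OF assms] by simp
qed

text \<open>The delay law nu is a probability measure: it is the law of T_1(i).\<close>
lemma iid_SR_nu_prob:
  assumes "iid_SR_family M \<mu> T1 X"
  shows "prob_space (nu_of \<mu>)"
proof -
  have "prob_space (distr M borel (T1 0))"
    by (rule prob_space.prob_space_distr[OF iid_SR_prob_space[OF assms] iid_SR_measurable(1)[OF assms]])
  then show ?thesis by (simp add: iid_SR_distr[OF assms])
qed

lemma nu_of_sets: "sets (nu_of \<mu>) = sets borel"
  unfolding nu_of_def by simp

lemma nu_tail_compl:
  assumes "prob_space (nu_of \<mu>)"
  shows "measure (nu_of \<mu>) {..s} = 1 - nu_tail \<mu> s"
proof -
  have "{..s} = space (nu_of \<mu>) - {s<..}"
    using sets_eq_imp_space_eq[OF nu_of_sets] by auto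
  then show ?thesis unfolding nu_tail_def
    by (simp add: prob_space.prob_compl[OF assms] nu_of_sets)
qed

lemma positive_law_exceeds_level:
  fixes \<mu> :: "real measure"
  assumes "prob_space \<mu>" "sets \<mu> = sets borel" "measure \<mu> {..0} = 0"
  shows "\<exists>\<delta>>0. 0 < measure \<mu> {\<delta><..}"
proof (rule ccontr)
  interpret prob_space \<mu> by fact
  have sp: "space \<mu> = UNIV" using sets_eq_imp_space_eq[OF assms(2)] by simp
  assume "\<not> ?thesis"
  then have null: "measure \<mu> {\<delta><..} = 0" if "0 < \<delta>" for \<delta>
    using that measure_nonneg[of \<mu> "{\<delta><..}"] by (meson not_le order.antisym)
  have "AE x in \<mu>. x \<le> inverse (real (Suc n))" for n
    by (subst AE_iff_measurable[of "{inverse (real (Suc n))<..}"])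
       (auto simp: sp assms(2) emeasure_eq_measure null)
  then have "AE x in \<mu>. \<forall>n. x \<le> inverse (real (Suc n))"
    by (simp add: AE_all_countable)
  moreover have "AE x in \<mu>. 0 < x"
    by (subst AE_iff_measurable[of "{..0}"]) (auto simp: sp assms(2,3) emeasure_eq_measure)
  ultimately have "AE x in \<mu>. False"
    by eventually_elim (meson leD reals_Archimedean)
  then show False by simp
qed

lemma iid_SR_gaps_pos_AE:
  assumes iid: "iid_SR_family M \<mu> T1 X"
    and law: "prob_space \<mu>" "sets \<mu> = sets borel" "measure \<mu> {..0} = 0"
  shows "AE w in M. \<forall>i k. 0 < X i k w"
proof -
  interpret mu: prob_space \<mu> by fact
  have sp: "space \<mu> = UNIV" using sets_eq_imp_space_eq[OF law(2)] by simp
  have "AE x in \<mu>. 0 < x"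
    by (subst AE_iff_measurable[of "{..0}"]) (auto simp: sp law mu.emeasure_eq_measure)
  then have "AE x in distr M borel (X i k). 0 < x" for i k
    using iid_SR_distr(2)[OF iid, of i k] by metis
  then have "AE w in M. 0 < X i k w" for i k
    by (rule AE_distrD[OF iid_SR_measurable(2)[OF iid]])
  then show ?thesis by (simp add: AE_all_countable)
qed

text \<open>Almost surely every process has infinitely many gaps above a level of positive mass
  (a Borel--Cantelli type argument using independence of the gaps).\<close>
lemma iid_SR_gaps_exceed_AE:
  assumes iid: "iid_SR_family M \<mu> T1 X" and law: "prob_space \<mu>" "sets \<mu> = sets borel"
    and pos: "0 < measure \<mu> {\<delta><..}"
  shows "AE w in M. \<forall>i N. \<exists>j\<ge>N. \<delta> < X i j w"
proof -
  interpret prob_space M using iid_SR_prob_space[OF iid] .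
  interpret mu: prob_space \<mu> by fact
  define q where "q = measure \<mu> {\<delta><..}"
  have q: "0 < q" "q \<le> 1" using pos by (auto simp: q_def)
  have low: "measure \<mu> {..\<delta>} = 1 - q"
  proof -
    have "{..\<delta>} = space \<mu> - {\<delta><..}" using sets_eq_imp_space_eq[OF law(2)] by auto
    then show ?thesis unfolding q_def by (simp add: mu.prob_compl law(2))
  qed
  have "AE w in M. \<exists>j\<ge>N. \<delta> < X i j w" for i N
  proof -
    define C where "C = {w\<in>space M. \<forall>j\<ge>N. X i j w \<le> \<delta>}"
    have C: "C \<in> events" unfolding C_def using iid_SR_measurable[OF iid] by measurable
    have bound: "prob C \<le> (1 - q) ^ Suc K" for K
    proof -
      have "C \<subseteq> (\<Inter>j\<in>{N..N + K}. SR_vars T1 X (Inr (i, j)) -` {..\<delta>} \<inter> space M)"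
        unfolding C_def by auto
      then have "prob C \<le> prob (\<Inter>j\<in>{N..N + K}. SR_vars T1 X (Inr (i, j)) -` {..\<delta>} \<inter> space M)"
        using C iid_SR_measurable[OF iid] by (intro finite_measure_mono) auto
      also have "\<dots> = measure \<mu> {..\<delta>} ^ card {N..N + K}"
        by (intro prob_INT_indep_identically_distributed[OF iid_SR_indep[OF iid]])
          (auto simp: inj_on_def iid_SR_distr[OF iid])
      finally show ?thesis by (simp add: low)
    qed
    have "(\<lambda>K. (1 - q) ^ Suc K) \<longlonglongrightarrow> 0"
      using q by (intro LIMSEQ_Suc[OF LIMSEQ_power_zero]) auto
    then have "prob C \<le> 0"
      using bound by (intro LIMSEQ_le_const[of "\<lambda>K. (1 - q) ^ Suc K"]) auto
    then have "prob C = 0" by (simp add: measure_le_0_iff)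
    then show ?thesis
      by (subst AE_iff_measurable[of C]) (auto simp: C_def emeasure_eq_measure C[unfolded C_def] not_less)
  qed
  then show ?thesis by (simp add: AE_all_countable)
qed

lemma iid_SR_count_pos_AE:
  assumes iid: "iid_SR_family M \<mu> T1 X"
    and law: "prob_space \<mu>" "sets \<mu> = sets borel" "measure \<mu> {..0} = 0"
  shows "AE w in M. \<forall>i. 0 < SR_count T1 X i s w \<longleftrightarrow> T1 i w \<le> s"
proof -
  obtain \<delta> where \<delta>: "0 < \<delta>" "0 < measure \<mu> {\<delta><..}"
    using positive_law_exceeds_level[OF law] by blast
  show ?thesis
    using iid_SR_gaps_pos_AE[OF iid law] iid_SR_gaps_exceed_AE[OF iid law(1,2) \<delta>(2)]
  proof eventually_elim
    case (elim w)
    show ?case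
    proof
      fix i
      show "0 < SR_count T1 X i s w \<longleftrightarrow> T1 i w \<le> s"
        using elim by (intro SR_count_pos_iff_first_renewal[OF _ \<delta>(1)]) (auto intro: less_imp_le)
    qed
  qed
qed

lemma all_pos_prob_eq:
  assumes iid: "iid_SR_family M \<mu> T1 X"
    and law: "prob_space \<mu>" "sets \<mu> = sets borel" "measure \<mu> {..0} = 0"
    and I: "finite I" "I \<noteq> {}"
  shows "all_pos_prob M T1 X I s = (1 - nu_tail \<mu> s) ^ card I"
proof -
  interpret prob_space M using iid_SR_prob_space[OF iid] .
  note SR_time_measurable[OF iid, measurable] iid_SR_measurable[OF iid, measurable]
  have E: "{w\<in>space M. \<forall>i\<in>I. 0 < SR_count T1 X i s w} \<in> events"
    unfolding SR_count_pos_iff using I by measurable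
  have F: "(\<Inter>i\<in>I. T1 i -` {..s} \<inter> space M) \<in> events" using I by measurable
  have "all_pos_prob M T1 X I s = prob (\<Inter>i\<in>I. SR_vars T1 X (Inl i) -` {..s} \<inter> space M)"
    unfolding all_pos_prob_def SR_vars_simps
    by (rule measure_eq_AE[OF _ E F]) (use iid_SR_count_pos_AE[OF iid law, of s] I in auto)
  also have "\<dots> = measure (nu_of \<mu>) {..s} ^ card I"
    by (intro prob_INT_indep_identically_distributed[OF iid_SR_indep[OF iid] I])
      (auto simp: iid_SR_distr[OF iid])
  finally show ?thesis by (simp add: nu_tail_compl[OF iid_SR_nu_prob[OF iid]])
qed

lemma some_pos_prob_eq:
  assumes iid: "iid_SR_family M \<mu> T1 X"
    and law: "prob_space \<mu>" "sets \<mu> = sets borel" "measure \<mu> {..0} = 0"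
    and I: "finite I" "I \<noteq> {}"
  shows "some_pos_prob M T1 X I s = 1 - nu_tail \<mu> s ^ card I"
proof -
  interpret prob_space M using iid_SR_prob_space[OF iid] .
  note SR_time_measurable[OF iid, measurable] iid_SR_measurable[OF iid, measurable]
  define E where "E = {w\<in>space M. \<exists>i\<in>I. 0 < SR_count T1 X i s w}"
  have E: "E \<in> events" unfolding E_def SR_count_pos_iff using I by measurable
  have G: "(\<Inter>i\<in>I. T1 i -` {s<..} \<inter> space M) \<in> events" using I by measurable
  have "prob (space M - E) = prob (\<Inter>i\<in>I. SR_vars T1 X (Inl i) -` {s<..} \<inter> space M)"
    unfolding SR_vars_simps
  proof (rule measure_eq_AE)
    show "AE w in M. w \<in> space M - E \<longleftrightarrow> w \<in> (\<Inter>i\<in>I. T1 i -` {s<..} \<inter> space M)"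
      using iid_SR_count_pos_AE[OF iid law, of s]
      by eventually_elim (use I in \<open>auto simp: E_def not_le\<close>)
  qed (use E G in auto)
  also have "\<dots> = measure (nu_of \<mu>) {s<..} ^ card I"
    by (intro prob_INT_indep_identically_distributed[OF iid_SR_indep[OF iid] I])
      (auto simp: iid_SR_distr[OF iid])
  finally show ?thesis
    unfolding some_pos_prob_def E_def[symmetric] using prob_compl[OF E] by (simp add: nu_tail_def)
qed

section \<open>The tail function nu and the scale a_lambda\<close>

lemma H_S_infty_law:
  assumes "H_S_infty \<mu>"
  shows "prob_space \<mu>" "sets \<mu> = sets borel" "measure \<mu> {..0} = 0"
  using assms unfolding H_S_infty_def by auto

definition nu_density :: "real measure \<Rightarrow> real \<Rightarrow> ennreal" where
  "nu_density \<mu> t = ennreal (indicator {0<..} t * measure \<mu> {t<..} / mean_of \<mu>)"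

lemma tail_measurable:
  fixes \<mu> :: "real measure"
  assumes "finite_measure \<mu>" "sets \<mu> = sets borel"
  shows "(\<lambda>t. measure \<mu> {t<..}) \<in> borel_measurable borel"
proof -
  have "mono (\<lambda>t. - measure \<mu> {t<..})"
    by (auto simp: mono_def assms(2) intro!: finite_measure.finite_measure_mono[OF assms(1)])
  then have "(\<lambda>t. - (- measure \<mu> {t<..})) \<in> borel_measurable borel"
    by (intro borel_measurable_uminus borel_measurable_mono)
  then show ?thesis by simp
qed

lemma nu_of_density: "nu_of \<mu> = density lborel (nu_density \<mu>)"
  by (simp add: nu_of_def nu_density_def[abs_def])

text \<open>The analysis of nu assumes (H_S(oo)) and that nu_S is a probability measure; the latter
  holds in the theorem because nu_S is the law of the first renewals.\<close>
context
  fixes \<mu> :: "real measure"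
  assumes H: "H_S_infty \<mu>" and nu_law: "prob_space (nu_of \<mu>)"
begin

abbreviation nu :: "real \<Rightarrow> real" where "nu \<equiv> nu_tail \<mu>"

lemma nu_emeasure:
  assumes "A \<in> sets borel"
  shows "emeasure (nu_of \<mu>) A = (\<integral>\<^sup>+ x. nu_density \<mu> x * indicator A x \<partial>lborel)"
proof -
  have "nu_density \<mu> \<in> borel_measurable lborel"
    using tail_measurable[OF prob_space.axioms(1)[OF H_S_infty_law(1)[OF H]] H_S_infty_law(2)[OF H]]
    unfolding nu_density_def by measurable
  then show ?thesis
    unfolding nu_of_density using assms by (simp add: emeasure_density)
qed

text \<open>The mean m_S is positive: otherwise the density of nu would vanish.\<close>
lemma mean_pos: "0 < mean_of \<mu>"
proof (rule ccontr)
  assume "\<not> 0 < mean_of \<mu>"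
  then have "nu_density \<mu> x = 0" for x
    unfolding nu_density_def by (auto simp: ennreal_eq_0_iff divide_nonneg_nonpos indicator_def)
  then have "emeasure (nu_of \<mu>) UNIV = 0" by (simp add: nu_emeasure)
  moreover have "emeasure (nu_of \<mu>) UNIV = 1"
    using prob_space.emeasure_space_1[OF nu_law] sets_eq_imp_space_eq[OF nu_of_sets] by simp
  ultimately show False by simp
qed

lemma nu_range: "0 \<le> nu x" "nu x \<le> 1"
  unfolding nu_tail_def using prob_space.prob_le_1[OF nu_law] by simp_all

lemma nu_antimono: "x \<le> y \<Longrightarrow> nu y \<le> nu x"
  unfolding nu_tail_def
  by (rule finite_measure.finite_measure_mono[OF prob_space.axioms(1)[OF nu_law]]) (auto simp: nu_of_sets)

lemma nu_nonpos: assumes "x \<le> 0" shows "nu x = 1"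
proof -
  have "emeasure (nu_of \<mu>) {..0} = (\<integral>\<^sup>+ t. nu_density \<mu> t * indicator {..0} t \<partial>lborel)"
    by (simp add: nu_emeasure)
  also have "\<dots> = (\<integral>\<^sup>+ t. 0 \<partial>(lborel :: real measure))"
    by (intro nn_integral_cong) (auto simp: nu_density_def indicator_def)
  finally have "measure (nu_of \<mu>) {..0} = 0" by (simp add: measure_def)
  moreover have "measure (nu_of \<mu>) {..x} \<le> measure (nu_of \<mu>) {..0}"
    using assms by (intro finite_measure.finite_measure_mono[OF prob_space.axioms(1)[OF nu_law]])
      (auto simp: nu_of_sets)
  ultimately show ?thesis
    using nu_tail_compl[OF nu_law, of x] measure_nonneg[of "nu_of \<mu>" "{..x}"] by linarith
qed

text \<open>The density is bounded by 1/m_S, so nu is Lipschitz.\<close>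
lemma nu_lipschitz:
  assumes "x \<le> y"
  shows "nu x - nu y \<le> (y - x) / mean_of \<mu>"
proof -
  interpret nu: prob_space "nu_of \<mu>" by (rule nu_law)
  have "nu x - nu y = measure (nu_of \<mu>) ({x<..} - {y<..})" unfolding nu_tail_def
    using assms by (subst nu.finite_measure_Diff) (auto simp: nu_of_sets)
  also have "{x<..} - {y<..} = {x<..y}" by auto
  finally have eq: "nu x - nu y = measure (nu_of \<mu>) {x<..y}" .
  have "emeasure (nu_of \<mu>) {x<..y} = (\<integral>\<^sup>+ t. nu_density \<mu> t * indicator {x<..y} t \<partial>lborel)"
    by (simp add: nu_emeasure)
  also have "\<dots> \<le> (\<integral>\<^sup>+ t. ennreal (1 / mean_of \<mu>) * indicator {x<..y} t \<partial>lborel)"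
  proof (intro nn_integral_mono)
    fix t
    have "indicator {0<..} t * measure \<mu> {t<..} \<le> (1::real)"
      using prob_space.prob_le_1[OF H_S_infty_law(1)[OF H]] by (auto simp: indicator_def)
    then have "nu_density \<mu> t \<le> ennreal (1 / mean_of \<mu>)"
      unfolding nu_density_def using mean_pos by (intro ennreal_leI divide_right_mono) auto
    then show "nu_density \<mu> t * indicator {x<..y} t \<le> ennreal (1 / mean_of \<mu>) * indicator {x<..y} t"
      by (auto simp: indicator_def)
  qed
  also have "\<dots> = ennreal ((y - x) / mean_of \<mu>)"
    using assms mean_pos by (simp add: nn_integral_cmult_indicator ennreal_mult[symmetric])
  finally have "measure (nu_of \<mu>) {x<..y} \<le> (y - x) / mean_of \<mu>"
    using assms mean_pos by (simp add: nu.emeasure_eq_measure ennreal_le_iff)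
  then show ?thesis using eq by simp
qed

lemma nu_continuous: "continuous_on UNIV nu"
proof -
  have dist: "dist (nu x') (nu x) \<le> dist x' x / mean_of \<mu>" for x x'
    using nu_lipschitz[of x x'] nu_lipschitz[of x' x] nu_antimono[of x x'] nu_antimono[of x' x]
    by (cases "x \<le> x'") (auto simp: dist_real_def abs_if)
  show ?thesis unfolding continuous_on_iff
  proof (intro ballI allI impI)
    fix x e :: real assume e: "0 < e"
    show "\<exists>d>0. \<forall>x'\<in>UNIV. dist x' x < d \<longrightarrow> dist (nu x') (nu x) < e"
    proof (intro exI[of _ "e * mean_of \<mu>"] conjI ballI impI)
      show "0 < e * mean_of \<mu>" using e mean_pos by simp
      fix x' assume "dist x' x < e * mean_of \<mu>"
      then have "dist x' x / mean_of \<mu> < e" using mean_pos by (simp add: field_simps)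
      then show "dist (nu x') (nu x) < e" using dist[of x' x] by simp
    qed
  qed
qed

text \<open>nu is positive everywhere: otherwise nu(y) / nu(y) = 0 for all large y, contradicting
  the case t = 1 of (H_S(oo)).\<close>
lemma nu_pos: "0 < nu x"
proof (rule ccontr)
  assume "\<not> 0 < nu x"
  then have zero: "nu y = 0" if "x \<le> y" for y
    using nu_antimono[OF that] nu_range(1)[of x] nu_range(1)[of y] by linarith
  have "eventually (\<lambda>y. nu y / nu (1 * y) = 0) at_top"
    using eventually_ge_at_top[of x] by eventually_elim (simp add: zero)
  then have "((\<lambda>y. nu y / nu (1 * y)) \<longlongrightarrow> 0) at_top" by (rule tendsto_eventually)
  moreover have "((\<lambda>y. nu y / nu (1 * y)) \<longlongrightarrow> 1) at_top"
    using H unfolding H_S_infty_def by (metis zero_less_one)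
  ultimately show False using tendsto_unique[of at_top] by force
qed

lemma nu_tendsto_0: "(nu \<longlongrightarrow> 0) at_top"
proof -
  interpret nu: prob_space "nu_of \<mu>" by (rule nu_law)
  have "(\<lambda>n. measure (nu_of \<mu>) {real n<..}) \<longlonglongrightarrow> measure (nu_of \<mu>) (\<Inter>n. {real n<..})"
    by (rule nu.finite_Lim_measure_decseq) (auto simp: nu_of_sets decseq_def)
  moreover have "(\<Inter>n. {real n<..}) = {}"
    by auto (meson leD real_arch_simple)
  ultimately have "(\<lambda>n. - nu (real n)) \<longlonglongrightarrow> - 0" unfolding nu_tail_def
    by (intro tendsto_minus) simp
  then have "((\<lambda>x. - nu x) \<longlongrightarrow> - 0) at_top"
    by (intro tendsto_at_topI_sequentially_real) (auto simp: mono_def nu_antimono)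
  then show ?thesis using tendsto_minus_cancel by blast
qed

lemma nu_ratio_below_one:
  assumes "0 < t" "t < 1"
  shows "filterlim (\<lambda>x. nu (x * t) / nu x) at_top at_top"
proof -
  have "((\<lambda>x. nu x / nu (t * x)) \<longlongrightarrow> 0) at_top"
    using H assms unfolding H_S_infty_def by auto
  then have "filterlim (\<lambda>x. inverse (nu x / nu (t * x))) at_top at_top"
    by (rule filterlim_inverse_at_top) (simp add: nu_pos)
  then show ?thesis by (simp add: mult.commute)
qed

lemma nu_ratio_above_one:
  assumes "1 < t"
  shows "((\<lambda>x. nu (x * t) / nu x) \<longlongrightarrow> 0) at_top"
proof -
  have "filterlim (\<lambda>x. nu x / nu (t * x)) at_top at_top"
    using H assms unfolding H_S_infty_def by auto
  then have "((\<lambda>x. inverse (nu x / nu (t * x))) \<longlongrightarrow> 0) at_top"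
    by (rule tendsto_inverse_0_at_top)
  then show ?thesis by (simp add: mult.commute)
qed

lemma a_of_eq:
  assumes l: "0 < l"
  shows "l * a_of \<mu> l = nu (a_of \<mu> l)" "0 < a_of \<mu> l"
proof -
  have "continuous_on {0..1/l} (\<lambda>a. l * a - nu a)"
    by (intro continuous_intros continuous_on_subset[OF nu_continuous]) auto
  moreover have "l * 0 - nu 0 \<le> 0" "0 \<le> l * (1/l) - nu (1/l)"
    using nu_nonpos[of 0] nu_range(2)[of "1/l"] l by simp_all
  ultimately obtain a where "l * a - nu a = 0"
    using IVT'[of "\<lambda>a. l * a - nu a" 0 0 "1/l"] l by auto
  moreover have strict: "l * b - nu b < l * c - nu c" if "b < c" for b c
    using mult_strict_left_mono[OF that l] nu_antimono[of b c] that by simp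
  ultimately have "\<exists>!a. l * a = nu a"
    by (metis diff_eq_eq less_irrefl linorder_neqE_linordered_idom add_0)
  then show eq: "l * a_of \<mu> l = nu (a_of \<mu> l)" unfolding a_of_def by (rule theI')
  show "0 < a_of \<mu> l"
  proof (rule ccontr)
    assume "\<not> 0 < a_of \<mu> l"
    then have "nu (a_of \<mu> l) = 1" "l * a_of \<mu> l \<le> 0"
      using nu_nonpos l by (auto simp: mult_nonneg_nonpos)
    then show False using eq by simp
  qed
qed

lemma a_of_tendsto: "filterlim (a_of \<mu>) at_top (at_right 0)"
  unfolding filterlim_at_top
proof
  fix Z :: real
  define K where "K = max Z 1"
  define c where "c = nu K / K"
  have K: "1 \<le> K" "Z \<le> K" unfolding K_def by auto
  have c: "0 < c" unfolding c_def using nu_pos[of K] K by simp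
  show "eventually (\<lambda>l. Z \<le> a_of \<mu> l) (at_right 0)"
    unfolding eventually_at_right_field
  proof (intro exI[of _ c] conjI allI impI)
    fix l :: real assume l: "0 < l" "l < c"
    show "Z \<le> a_of \<mu> l"
    proof (rule ccontr)
      assume "\<not> Z \<le> a_of \<mu> l"
      then have aK: "a_of \<mu> l \<le> K" using K by simp
      have "l * a_of \<mu> l \<le> l * K" using aK l by simp
      also have "\<dots> < c * K" using l K by simp
      also have "\<dots> = nu K" unfolding c_def using K by simp
      also have "\<dots> \<le> nu (a_of \<mu> l)" using nu_antimono[OF aK] .
      finally show False using a_of_eq(1)[OF l(1)] by simp
    qed
  qed (rule c)
qed

lemma nu_scaled_a_tendsto_0:
  assumes "0 < t"
  shows "((\<lambda>l. nu (a_of \<mu> l * t)) \<longlongrightarrow> 0) (at_right 0)"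
  by (rule filterlim_compose[OF nu_tendsto_0 filterlim_at_top_mult_tendsto_pos[OF tendsto_const assms a_of_tendsto]])

lemma n_of_bounds:
  "eventually (\<lambda>l. 1 / nu (a_of \<mu> l) - 1 \<le> real (n_of \<mu> l) \<and>
                   real (n_of \<mu> l) \<le> 1 / nu (a_of \<mu> l) \<and> 1 \<le> n_of \<mu> l) (at_right 0)"
proof -
  have "eventually (\<lambda>l. nu (a_of \<mu> l) < 1/2) (at_right 0)"
    using nu_scaled_a_tendsto_0[of 1] by (intro order_tendstoD) auto
  then show ?thesis using eventually_at_right_less[of 0]
  proof eventually_elim
    case (elim l)
    define L where "L = nu (a_of \<mu> l)"
    have L: "0 < L" "L < 1/2" using elim nu_pos unfolding L_def by auto
    have "2 \<le> 1 / L" using L by (simp add: field_simps)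
    then have "0 \<le> \<lfloor>1 / L\<rfloor>" by linarith
    then have "real (n_of \<mu> l) = of_int \<lfloor>1 / L\<rfloor>"
      unfolding n_of_def a_of_eq(1)[OF elim(2)] L_def[symmetric] by simp
    then show ?case
      using \<open>2 \<le> 1 / L\<close> floor_correct[of "1 / L"] unfolding L_def[symmetric] by linarith
  qed
qed

section \<open>Limits of (1 - nu(a_lambda t))^c\<close>

lemma power_tendsto_0:
  fixes q :: "'a \<Rightarrow> real" and c :: "'a \<Rightarrow> nat"
  assumes "\<And>l. 0 \<le> q l \<and> q l \<le> 1" "filterlim (\<lambda>l. q l * real (c l)) at_top F"
  shows "((\<lambda>l. (1 - q l) ^ c l) \<longlongrightarrow> 0) F"
proof (rule tendsto_sandwich[OF _ _ tendsto_const])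
  show "eventually (\<lambda>l. 0 \<le> (1 - q l) ^ c l) F" using assms(1) by simp
  show "eventually (\<lambda>l. (1 - q l) ^ c l \<le> exp (- (q l * real (c l)))) F"
  proof (rule always_eventually, intro allI)
    fix l
    have "(1 - q l) ^ c l \<le> exp (- q l) ^ c l"
      using assms(1)[of l] exp_ge_add_one_self[of "- q l"] by (intro power_mono) auto
    also have "\<dots> = exp (- (q l * real (c l)))" by (simp add: exp_of_nat_mult[symmetric] mult.commute)
    finally show "(1 - q l) ^ c l \<le> exp (- (q l * real (c l)))" .
  qed
  show "((\<lambda>l. exp (- (q l * real (c l)))) \<longlongrightarrow> 0) F"
    by (intro filterlim_compose[OF exp_at_bot] filterlim_compose[OF filterlim_uminus_at_bot_at_top] assms(2))
qed

lemma power_tendsto_1: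
  fixes q :: "'a \<Rightarrow> real" and c :: "'a \<Rightarrow> nat"
  assumes "\<And>l. 0 \<le> q l \<and> q l \<le> 1" "((\<lambda>l. q l * real (c l)) \<longlongrightarrow> 0) F"
  shows "((\<lambda>l. (1 - q l) ^ c l) \<longlongrightarrow> 1) F"
proof (rule tendsto_sandwich)
  show "eventually (\<lambda>l. 1 - q l * real (c l) \<le> (1 - q l) ^ c l) F"
  proof (rule always_eventually, intro allI)
    fix l
    have "1 + real (c l) * (- q l) \<le> (1 + - q l) ^ c l"
      by (rule Bernoulli_inequality) (use assms(1)[of l] in auto)
    then show "1 - q l * real (c l) \<le> (1 - q l) ^ c l" by (simp add: mult.commute)
  qed
  show "eventually (\<lambda>l. (1 - q l) ^ c l \<le> 1) F"
    using assms(1) by (intro always_eventually allI power_le_one) auto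
  show "((\<lambda>l. 1 - q l * real (c l)) \<longlongrightarrow> 1) F"
    using tendsto_diff[OF tendsto_const assms(2), of 1] by simp
qed simp

lemma power_complement_tendsto_1:
  fixes q :: "'a \<Rightarrow> real" and c :: "'a \<Rightarrow> nat"
  assumes "\<And>l. 0 \<le> q l \<and> q l \<le> 1 \<and> 1 \<le> c l" "(q \<longlongrightarrow> 0) F"
  shows "((\<lambda>l. 1 - q l ^ c l) \<longlongrightarrow> 1) F"
proof -
  have "((\<lambda>l. q l ^ c l) \<longlongrightarrow> 0) F"
  proof (rule tendsto_sandwich[OF _ _ tendsto_const assms(2)])
    show "eventually (\<lambda>l. 0 \<le> q l ^ c l) F" using assms(1) by simp
    show "eventually (\<lambda>l. q l ^ c l \<le> q l) F"
      using assms(1) power_decreasing[of 1 "c _" "q _"] by (intro always_eventually) auto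
  qed
  from tendsto_diff[OF tendsto_const this, of 1] show ?thesis by simp
qed

lemma all_pos_limit_nonpos_time:
  assumes "t \<le> 0" and c: "\<And>l. 1 \<le> c l"
  shows "((\<lambda>l. (1 - nu (a_of \<mu> l * t)) ^ c l) \<longlongrightarrow> 0) (at_right 0)"
proof (rule tendsto_eventually)
  show "eventually (\<lambda>l. (1 - nu (a_of \<mu> l * t)) ^ c l = 0) (at_right 0)"
    using eventually_at_right_less[of 0]
  proof eventually_elim
    case (elim l)
    have "nu (a_of \<mu> l * t) = 1"
      using a_of_eq(2)[OF elim] assms(1) by (intro nu_nonpos) (simp add: mult_nonneg_nonpos)
    then show ?case using c[of l] by (simp add: zero_power)
  qed
qed

text \<open>Part (i): c of order m_lambda and t < 1; here admissibility gives q c -> oo.\<close>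
lemma all_pos_limit_m_below:
  assumes m: "admissible_m \<mu> m" and t: "t < 1" and \<kappa>: "0 < \<kappa>"
    and c: "\<And>l. \<kappa> * real (m l) \<le> real (c l)" "\<And>l. 1 \<le> c l"
  shows "((\<lambda>l. (1 - nu (a_of \<mu> l * t)) ^ c l) \<longlongrightarrow> 0) (at_right 0)"
proof (cases "t \<le> 0")
  case True
  then show ?thesis using all_pos_limit_nonpos_time c(2) by blast
next
  case False
  have "filterlim (\<lambda>l. real (m l) * nu (a_of \<mu> l * t)) at_top (at_right 0)"
    using m False t unfolding admissible_m_def by auto
  then have "filterlim (\<lambda>l. \<kappa> * (real (m l) * nu (a_of \<mu> l * t))) at_top (at_right 0)"
    using \<kappa> by (intro filterlim_tendsto_pos_mult_at_top[OF tendsto_const]) auto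
  moreover have "\<kappa> * (real (m l) * nu (a_of \<mu> l * t)) \<le> nu (a_of \<mu> l * t) * real (c l)" for l
    using mult_right_mono[OF c(1) nu_range(1)[of "a_of \<mu> l * t"]] by (simp add: ac_simps)
  ultimately have "filterlim (\<lambda>l. nu (a_of \<mu> l * t) * real (c l)) at_top (at_right 0)"
    by (elim filterlim_at_top_mono) simp
  then show ?thesis by (intro power_tendsto_0) (simp add: nu_range)
qed

text \<open>Part (ii): c of order m_lambda and t >= 1; then q c <= c nu(a_lambda), which is of
  order m_lambda / n_lambda -> 0.\<close>
lemma all_pos_limit_m_above:
  assumes m: "admissible_m \<mu> m" and t: "1 \<le> t" and \<kappa>: "0 \<le> \<kappa>"
    and c: "\<And>l. real (c l) \<le> \<kappa> * real (m l) + 2"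
  shows "((\<lambda>l. (1 - nu (a_of \<mu> l * t)) ^ c l) \<longlongrightarrow> 1) (at_right 0)"
proof (rule power_tendsto_1)
  have mn: "((\<lambda>l. real (m l) / real (n_of \<mu> l)) \<longlongrightarrow> 0) (at_right 0)"
    using m unfolding admissible_m_def by auto
  have bound: "((\<lambda>l. \<kappa> * (real (m l) / real (n_of \<mu> l)) + 2 * nu (a_of \<mu> l)) \<longlongrightarrow> 0) (at_right 0)"
    using tendsto_add[OF tendsto_mult[OF tendsto_const mn] tendsto_mult[OF tendsto_const nu_scaled_a_tendsto_0[of 1]]]
    by simp
  have "eventually (\<lambda>l. nu (a_of \<mu> l * t) * real (c l)
          \<le> \<kappa> * (real (m l) / real (n_of \<mu> l)) + 2 * nu (a_of \<mu> l)) (at_right 0)"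
    using n_of_bounds eventually_at_right_less[of 0]
  proof eventually_elim
    case (elim l)
    define L where "L = nu (a_of \<mu> l)"
    have L: "0 < L" unfolding L_def by (rule nu_pos)
    have qL: "nu (a_of \<mu> l * t) \<le> L"
      unfolding L_def using a_of_eq(2)[OF elim(2)] t by (intro nu_antimono) simp
    have "L * real (n_of \<mu> l) \<le> L * (1 / L)"
      using elim L unfolding L_def[symmetric] by (intro mult_left_mono) auto
    then have Ln: "L \<le> 1 / real (n_of \<mu> l)"
      using elim L by (simp add: pos_le_divide_eq)
    have "nu (a_of \<mu> l * t) * real (c l) \<le> L * (\<kappa> * real (m l) + 2)"
      using qL c[of l] L by (intro mult_mono) auto
    also have "\<dots> = \<kappa> * (real (m l) * L) + 2 * L" by (simp add: algebra_simps)
    also have "\<dots> \<le> \<kappa> * (real (m l) * (1 / real (n_of \<mu> l))) + 2 * L"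
      using Ln \<kappa> by (intro add_right_mono mult_left_mono) auto
    finally show ?case unfolding L_def by simp
  qed
  then show "((\<lambda>l. nu (a_of \<mu> l * t) * real (c l)) \<longlongrightarrow> 0) (at_right 0)"
    by (intro tendsto_sandwich[OF _ _ tendsto_const bound]) (simp_all add: nu_range)
qed (simp add: nu_range)

text \<open>Part (iii): c of order n_lambda and t < 1; then q c is at least of order
  nu(a_lambda t) / nu(a_lambda) -> oo.\<close>
lemma all_pos_limit_n_below:
  assumes t: "t < 1" and \<kappa>: "0 < \<kappa>"
    and c: "\<And>l. \<kappa> * real (n_of \<mu> l) \<le> real (c l)" "\<And>l. 1 \<le> c l"
  shows "((\<lambda>l. (1 - nu (a_of \<mu> l * t)) ^ c l) \<longlongrightarrow> 0) (at_right 0)"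
proof (cases "t \<le> 0")
  case True
  then show ?thesis using all_pos_limit_nonpos_time c(2) by blast
next
  case False
  define R where "R l = nu (a_of \<mu> l * t) / nu (a_of \<mu> l)" for l
  have "filterlim R at_top (at_right 0)"
    unfolding R_def using False t by (intro filterlim_compose[OF nu_ratio_below_one a_of_tendsto]) auto
  then have "filterlim (\<lambda>l. \<kappa> * (-1 + R l)) at_top (at_right 0)"
    using \<kappa> by (intro filterlim_tendsto_pos_mult_at_top[OF tendsto_const] filterlim_tendsto_add_at_top[OF tendsto_const]) auto
  moreover have "eventually (\<lambda>l. \<kappa> * (-1 + R l) \<le> nu (a_of \<mu> l * t) * real (c l)) (at_right 0)"
    using n_of_bounds
  proof eventually_elim
    case (elim l)
    define q where "q = nu (a_of \<mu> l * t)"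
    have q: "0 \<le> q" "q \<le> 1" unfolding q_def by (rule nu_range)+
    have "\<kappa> * (-1 + R l) \<le> \<kappa> * (q * (1 / nu (a_of \<mu> l) - 1))"
      using \<kappa> q unfolding R_def q_def[symmetric] by (simp add: algebra_simps)
    also have "\<dots> \<le> \<kappa> * (q * real (n_of \<mu> l))"
      using \<kappa> q elim by (intro mult_left_mono) auto
    also have "\<dots> \<le> q * real (c l)"
      using mult_left_mono[OF c(1)[of l] q(1)] by (simp add: ac_simps)
    finally show ?case unfolding q_def .
  qed
  ultimately have "filterlim (\<lambda>l. nu (a_of \<mu> l * t) * real (c l)) at_top (at_right 0)"
    by (rule filterlim_at_top_mono)
  then show ?thesis by (intro power_tendsto_0) (simp add: nu_range)
qed

text \<open>Part (iv): c of order n_lambda and t > 1; then q c is at most of order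
  nu(a_lambda t) / nu(a_lambda) -> 0.\<close>
lemma all_pos_limit_n_above:
  assumes t: "1 < t" and \<kappa>: "0 \<le> \<kappa>"
    and c: "\<And>l. real (c l) \<le> \<kappa> * real (n_of \<mu> l) + 2"
  shows "((\<lambda>l. (1 - nu (a_of \<mu> l * t)) ^ c l) \<longlongrightarrow> 1) (at_right 0)"
proof (rule power_tendsto_1)
  define R where "R l = nu (a_of \<mu> l * t) / nu (a_of \<mu> l)" for l
  have "(R \<longlongrightarrow> 0) (at_right 0)"
    unfolding R_def using t by (intro filterlim_compose[OF nu_ratio_above_one a_of_tendsto])
  then have bound: "((\<lambda>l. \<kappa> * R l + 2 * nu (a_of \<mu> l * t)) \<longlongrightarrow> 0) (at_right 0)"
    using tendsto_add[OF tendsto_mult[OF tendsto_const] tendsto_mult[OF tendsto_const nu_scaled_a_tendsto_0]] t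
    by fastforce
  have "eventually (\<lambda>l. nu (a_of \<mu> l * t) * real (c l) \<le> \<kappa> * R l + 2 * nu (a_of \<mu> l * t)) (at_right 0)"
    using n_of_bounds
  proof eventually_elim
    case (elim l)
    define q where "q = nu (a_of \<mu> l * t)"
    have q: "0 \<le> q" unfolding q_def by (rule nu_range)
    have "\<kappa> * real (n_of \<mu> l) \<le> \<kappa> * (1 / nu (a_of \<mu> l))"
      using elim \<kappa> by (intro mult_left_mono) auto
    then have "real (c l) \<le> \<kappa> * (1 / nu (a_of \<mu> l)) + 2"
      using c[of l] by linarith
    then have "q * real (c l) \<le> q * (\<kappa> * (1 / nu (a_of \<mu> l)) + 2)"
      using q by (rule mult_left_mono)
    also have "\<dots> = \<kappa> * R l + 2 * q" unfolding R_def q_def by (simp add: algebra_simps)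
    finally show ?case unfolding q_def .
  qed
  then show "((\<lambda>l. nu (a_of \<mu> l * t) * real (c l)) \<longlongrightarrow> 0) (at_right 0)"
    by (intro tendsto_sandwich[OF _ _ tendsto_const bound]) (simp_all add: nu_range)
qed (simp add: nu_range)

text \<open>Part (v): at least one process; nu(a_lambda t) -> 0 suffices.\<close>
lemma some_pos_limit:
  assumes "0 < t" and "\<And>l. 1 \<le> c l"
  shows "((\<lambda>l. 1 - nu (a_of \<mu> l * t) ^ c l) \<longlongrightarrow> 1) (at_right 0)"
  using assms nu_range by (intro power_complement_tendsto_1 nu_scaled_a_tendsto_0) auto

end

lemma card_floor_window:
  fixes a b x :: real assumes "a < b" "0 \<le> x"
  shows "(b - a) * x \<le> real (card {\<lfloor>a*x\<rfloor>..\<lfloor>b*x\<rfloor>})"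
    "real (card {\<lfloor>a*x\<rfloor>..\<lfloor>b*x\<rfloor>}) \<le> (b - a) * x + 2"
    "1 \<le> card {\<lfloor>a*x\<rfloor>..\<lfloor>b*x\<rfloor>}"
proof -
  have fl: "\<lfloor>a*x\<rfloor> \<le> \<lfloor>b*x\<rfloor>" using assms by (intro floor_mono mult_right_mono) auto
  then have c: "real (card {\<lfloor>a*x\<rfloor>..\<lfloor>b*x\<rfloor>}) = of_int (\<lfloor>b*x\<rfloor> - \<lfloor>a*x\<rfloor> + 1)" by simp
  show "(b - a) * x \<le> real (card {\<lfloor>a*x\<rfloor>..\<lfloor>b*x\<rfloor>})" "real (card {\<lfloor>a*x\<rfloor>..\<lfloor>b*x\<rfloor>}) \<le> (b - a) * x + 2"
    unfolding c using floor_correct[of "a*x"] floor_correct[of "b*x"] by (simp_all add: left_diff_distrib; linarith)+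
  show "1 \<le> card {\<lfloor>a*x\<rfloor>..\<lfloor>b*x\<rfloor>}" using fl by simp
qed

theorem mainTheorem10:
  fixes \<mu> :: "real measure" and M :: "'w measure"
    and T1 :: "int \<Rightarrow> 'w \<Rightarrow> real" and X :: "int \<Rightarrow> nat \<Rightarrow> 'w \<Rightarrow> real"
    and m :: "real \<Rightarrow> nat" and a b :: real
  assumes "H_S_infty \<mu>"
    and "admissible_m \<mu> m"
    and "iid_SR_family M \<mu> T1 X"
    and "a < b"
  shows "(\<forall>t<1. ((\<lambda>l. all_pos_prob M T1 X {\<lfloor>a * real (m l)\<rfloor>..\<lfloor>b * real (m l)\<rfloor>} (a_of \<mu> l * t))
                 \<longlongrightarrow> 0) (at_right 0))
       \<and> (\<forall>t\<ge>1. ((\<lambda>l. all_pos_prob M T1 X {\<lfloor>a * real (m l)\<rfloor>..\<lfloor>b * real (m l)\<rfloor>} (a_of \<mu> l * t))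
                 \<longlongrightarrow> 1) (at_right 0))
       \<and> (\<forall>t<1. ((\<lambda>l. all_pos_prob M T1 X {\<lfloor>a * real (n_of \<mu> l)\<rfloor>..\<lfloor>b * real (n_of \<mu> l)\<rfloor>} (a_of \<mu> l * t))
                 \<longlongrightarrow> 0) (at_right 0))
       \<and> (\<forall>t>1. ((\<lambda>l. all_pos_prob M T1 X {\<lfloor>a * real (n_of \<mu> l)\<rfloor>..\<lfloor>b * real (n_of \<mu> l)\<rfloor>} (a_of \<mu> l * t))
                 \<longlongrightarrow> 1) (at_right 0))
       \<and> (\<forall>t>0. ((\<lambda>l. some_pos_prob M T1 X {\<lfloor>a * real (m l)\<rfloor>..\<lfloor>b * real (m l)\<rfloor>} (a_of \<mu> l * t))
                 \<longlongrightarrow> 1) (at_right 0))"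
proof -
  note H = assms(1) and iid = assms(3)
  note nu = iid_SR_nu_prob[OF iid] and law = H_S_infty_law[OF H]
  define c where "c N l = card {\<lfloor>a * real (N l)\<rfloor>..\<lfloor>b * real (N l)\<rfloor>}" for N :: "real \<Rightarrow> nat" and l
  have size: "(b - a) * real (N l) \<le> real (c N l)" "real (c N l) \<le> (b - a) * real (N l) + 2"
    "1 \<le> c N l" for N l
    unfolding c_def using card_floor_window[OF assms(4), of "real (N l)"] by auto
  have probs: "all_pos_prob M T1 X {\<lfloor>a * real (N l)\<rfloor>..\<lfloor>b * real (N l)\<rfloor>} s = (1 - nu_tail \<mu> s) ^ c N l"
    "some_pos_prob M T1 X {\<lfloor>a * real (N l)\<rfloor>..\<lfloor>b * real (N l)\<rfloor>} s = 1 - nu_tail \<mu> s ^ c N l" for N l s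
    using all_pos_prob_eq[OF iid law] some_pos_prob_eq[OF iid law] size(3)[of N l]
    unfolding c_def by (auto simp: card_gt_0_iff[symmetric])
  have ab: "0 < b - a" using assms(4) by simp
  show ?thesis
    unfolding probs
    using all_pos_limit_m_below[OF H nu assms(2) _ ab size(1)[of m] size(3)[of m]]
      all_pos_limit_m_above[OF H nu assms(2) _ less_imp_le[OF ab] size(2)[of m]]
      all_pos_limit_n_below[OF H nu _ ab size(1)[of "n_of \<mu>"] size(3)[of "n_of \<mu>"]]
      all_pos_limit_n_above[OF H nu _ less_imp_le[OF ab] size(2)[of "n_of \<mu>"]]
      some_pos_limit[OF H nu, of _ "c m", OF _ size(3)]
    by blast
qed

end
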